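(* Let $U\in\mathbb{R}^{d\times n}$ be a frame, $z\in\mathbb{R}^n_{++}$ and $T\subseteq[n]$. Then the progress function $h:=h^{U,z}_T$ is (non-strictly) increasing and concave on $(0,\infty)$.
   Context: A frame is a full row rank matrix $U\in\mathbb{R}^{d\times n}$; $Z=\mathrm{diag}(z)$; $U_T,Z_T$ restrictions to $T$; $\bar T=[n]\setminus T$. $h^{U,z}_T(\alpha):=\mathrm{tr}[\alpha U_TZ_TU_T^{\mathsf T}(U_{\bar T}Z_{\bar T}U_{\bar T}^{\mathsf T}+\alpha U_TZ_TU_T^{\mathsf T})^{-1}]$, the sum over $j\in T$ of the leverage scores $\mathrm{lev}^U_j(z\circ(1_{\bar T}+\alpha1_T))$, where $\mathrm{lev}^U_j(w)=w_ju_j^{\mathsf T}(U\,\mathrm{diag}(w)U^{\mathsf T})^{-1}u_j$. *)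

theory Defs
  imports "HOL-Analysis.Analysis"
begin

definition frame :: "real^'n^'d \<Rightarrow> bool" where
  "frame U \<longleftrightarrow> rank U = CARD('d)"

definition diag_mat :: "real^'n \<Rightarrow> real^'n^'n" where
  "diag_mat w = (\<chi> i j. if i = j then w $ i else 0)"

text \<open>U_T Z_T U_T^T, written as U diag(z restricted to T, zero elsewhere) U^T,
  i.e. the sum over j in T of z_j u_j u_j^T.\<close>
definition restr_gram :: "real^'n^'d \<Rightarrow> real^'n \<Rightarrow> 'n set \<Rightarrow> real^'d^'d" where
  "restr_gram U z T = U ** diag_mat (\<chi> j. if j \<in> T then z $ j else 0) ** transpose U"

definition progress_fun :: "real^'n^'d \<Rightarrow> real^'n \<Rightarrow> 'n set \<Rightarrow> real \<Rightarrow> real" where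
  "progress_fun U z T \<alpha> =
     trace ((\<alpha> *\<^sub>R restr_gram U z T) **
            matrix_inv (restr_gram U z (- T) + \<alpha> *\<^sub>R restr_gram U z T))"

end

theory Submission
  imports Defs
begin

text \<open>Write M(a) = A + a B with A = U_S Z_S U_S^T for the complement S of T and
  B = U_T Z_T U_T^T, so that h(a) = tr((M(a) - A) M(a)^-1) = d - sum_{j in S} z_j u_j^T M(a)^-1 u_j.
  For an invertible positive semidefinite X one has x^T X^-1 x = max_y (2 x^T y - y^T X y),
  the maximum being attained at y = X^-1 x. For X = M(a) this is a pointwise maximum of affine
  functions of a with slopes -y^T B y <= 0, hence a convex nonincreasing function of a;
  so h is concave and nondecreasing.\<close>

lemma matrix_inv_right: "invertible X \<Longrightarrow> X ** matrix_inv X = mat 1"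
  unfolding invertible_def matrix_inv_def by (metis (mono_tags, lifting) someI_ex)

lemma convex_on_max_affine:
  fixes q :: "real \<Rightarrow> real" and c p :: "'y \<Rightarrow> real"
  assumes "convex S"
    and upper: "\<And>a y. a \<in> S \<Longrightarrow> c y - a * p y \<le> q a"
    and attained: "\<And>a. a \<in> S \<Longrightarrow> \<exists>y. q a = c y - a * p y"
  shows "convex_on S q"
  unfolding convex_on_def
proof (intro conjI assms ballI allI impI)
  fix a b s t :: real
  assume ab: "a \<in> S" "b \<in> S" and st: "0 \<le> s" "0 \<le> t" "s + t = 1"
  have "s * a + t * b \<in> S"
    using convexD[OF \<open>convex S\<close> ab st] by simp
  then obtain y where y: "q (s * a + t * b) = c y - (s * a + t * b) * p y"
    using attained by auto
  have "c y - (s * a + t * b) * p y = s * (c y - a * p y) + t * (c y - b * p y)"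
    using st(3) by (simp add: algebra_simps flip: distrib_right)
  also have "\<dots> \<le> s * q a + t * q b"
    using st upper ab by (intro add_mono mult_left_mono) auto
  finally show "q (s *\<^sub>R a + t *\<^sub>R b) \<le> s * q a + t * q b"
    using y by simp
qed

lemma antimono_on_max_affine:
  fixes q :: "real \<Rightarrow> real" and c p :: "'y \<Rightarrow> real"
  assumes "\<And>y. 0 \<le> p y"
    and upper: "\<And>a y. a \<in> S \<Longrightarrow> c y - a * p y \<le> q a"
    and attained: "\<And>a. a \<in> S \<Longrightarrow> \<exists>y. q a = c y - a * p y"
  shows "antimono_on S q"
proof (rule monotone_onI)
  fix a b assume ab: "a \<in> S" "b \<in> S" "a \<le> b"
  obtain y where "q b = c y - b * p y"
    using attained ab by blast
  moreover have "a * p y \<le> b * p y"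
    using ab assms(1) by (simp add: mult_right_mono)
  ultimately show "q b \<le> q a"
    using upper[of a y] ab by linarith
qed

lemma convex_on_nonneg_sum:
  fixes f :: "'i \<Rightarrow> 'a::real_vector \<Rightarrow> real"
  assumes "finite I" "convex S"
    and "\<And>i. i \<in> I \<Longrightarrow> 0 \<le> w i" "\<And>i. i \<in> I \<Longrightarrow> convex_on S (f i)"
  shows "convex_on S (\<lambda>x. \<Sum>i\<in>I. w i * f i x)"
  using assms
  by (induction I rule: finite_induct) (auto simp: convex_on_const intro!: convex_on_add convex_on_cmul)

lemma antimono_on_nonneg_sum:
  fixes f :: "'i \<Rightarrow> 'a::order \<Rightarrow> real"
  assumes "\<And>i. i \<in> I \<Longrightarrow> 0 \<le> w i" "\<And>i. i \<in> I \<Longrightarrow> antimono_on S (f i)"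
  shows "antimono_on S (\<lambda>x. \<Sum>i\<in>I. w i * f i x)"
  using assms by (intro monotone_onI sum_mono mult_left_mono) (auto dest: monotone_onD)

lemma mono_on_concave_on_const_minus:
  fixes F h :: "real \<Rightarrow> real"
  assumes "convex S" "convex_on S F" "antimono_on S F" "\<And>x. x \<in> S \<Longrightarrow> h x = c - F x"
  shows "mono_on S h \<and> concave_on S h"
proof
  show "mono_on S h"
    using assms(3,4) by (intro mono_onI) (auto dest: monotone_onD)
  have "concave_on S (\<lambda>x. c - F x)"
    using assms(1,2) by (intro concave_on_diff) (simp_all add: concave_on_const)
  then show "concave_on S h"
    using assms(4) convexD[OF assms(1)] by (simp add: concave_on_iff)
qed

lemma inner_matrix_vector_symmetric:
  fixes X :: "real^'n^'n"
  assumes "transpose X = X"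
  shows "x \<bullet> (X *v y) = y \<bullet> (X *v x)"
  by (metis assms dot_lmul_matrix inner_commute transpose_matrix_vector)

lemma inverse_quadratic_form_ge:
  fixes X :: "real^'n^'n"
  assumes "invertible X" "transpose X = X" "\<And>v. 0 \<le> v \<bullet> (X *v v)"
  shows "2 * (x \<bullet> y) - y \<bullet> (X *v y) \<le> x \<bullet> (matrix_inv X *v x)"
proof -
  define w where "w = matrix_inv X *v x"
  have Xw: "X *v w = x"
    by (simp add: w_def matrix_vector_mul_assoc matrix_inv_right assms(1))
  have "0 \<le> (y - w) \<bullet> (X *v (y - w))"
    by (rule assms(3))
  also have "\<dots> = y \<bullet> (X *v y) - 2 * (x \<bullet> y) + x \<bullet> w"
    using inner_matrix_vector_symmetric[OF assms(2), of w y] Xw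
    by (simp add: matrix_vector_mult_diff_distrib inner_diff_left inner_diff_right inner_commute)
  finally show ?thesis
    by (simp add: w_def)
qed

lemma inverse_quadratic_form_attained:
  fixes X :: "real^'n^'n" and x :: "real^'n"
  assumes "invertible X"
  defines "w \<equiv> matrix_inv X *v x"
  shows "x \<bullet> (matrix_inv X *v x) = 2 * (x \<bullet> w) - w \<bullet> (X *v w)"
  using assms by (simp add: matrix_vector_mul_assoc matrix_inv_right inner_commute)

lemma inverse_pencil_form_convex_antimono:
  fixes A B :: "real^'n^'n" and x :: "real^'n"
  assumes symm: "transpose A = A" "transpose B = B"
    and psd: "\<And>v. 0 \<le> v \<bullet> (A *v v)" "\<And>v. 0 \<le> v \<bullet> (B *v v)"
    and inv: "\<And>a. a \<in> S \<Longrightarrow> invertible (A + a *\<^sub>R B)"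
    and "S \<subseteq> {0..}" "convex S"
  defines "q \<equiv> \<lambda>a. x \<bullet> (matrix_inv (A + a *\<^sub>R B) *v x)"
  shows "convex_on S q" "antimono_on S q"
proof -
  define c where "c y = 2 * (x \<bullet> y) - y \<bullet> (A *v y)" for y
  define p where "p y = y \<bullet> (B *v y)" for y
  have pencil_form: "v \<bullet> ((A + a *\<^sub>R B) *v v) = v \<bullet> (A *v v) + a * p v" for a v
    by (simp add: p_def matrix_vector_mult_add_rdistrib inner_add_right
        flip: scaleR_matrix_vector_assoc)
  have pencil_symmetric: "transpose (A + a *\<^sub>R B) = A + a *\<^sub>R B" for a
    using symm by (simp add: vec_eq_iff transpose_def)
  have upper: "c y - a * p y \<le> q a" if "a \<in> S" for a y
  proof -
    have "0 \<le> v \<bullet> ((A + a *\<^sub>R B) *v v)" for v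
      using that \<open>S \<subseteq> {0..}\<close> psd by (auto simp: pencil_form p_def)
    then show ?thesis
      using inverse_quadratic_form_ge[OF inv[OF that] pencil_symmetric, of x y]
      by (simp add: q_def c_def pencil_form)
  qed
  have attained: "\<exists>y. q a = c y - a * p y" if "a \<in> S" for a
  proof
    show "q a = c (matrix_inv (A + a *\<^sub>R B) *v x) - a * p (matrix_inv (A + a *\<^sub>R B) *v x)"
      using inverse_quadratic_form_attained[OF inv[OF that], of x]
      unfolding q_def c_def pencil_form by linarith
  qed
  show "convex_on S q"
    by (rule convex_on_max_affine[OF \<open>convex S\<close> upper attained])
  show "antimono_on S q"
    by (rule antimono_on_max_affine[OF psd(2)[folded p_def] upper attained])
qed

lemma invertible_if_positive_definite:
  fixes X :: "real^'n^'n"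
  assumes "\<And>y. y \<noteq> 0 \<Longrightarrow> 0 < y \<bullet> (X *v y)"
  shows "invertible X"
proof -
  have "\<forall>y. X *v y = 0 \<longrightarrow> y = 0"
    using assms by (metis inner_zero_right less_irrefl)
  then show ?thesis
    by (simp add: invertible_left_inverse matrix_left_invertible_ker)
qed

lemma trace_mult_matrix_inv_sum:
  fixes A B :: "real^'n^'n"
  assumes "invertible (A + B)"
  shows "trace (B ** matrix_inv (A + B)) = CARD('n) - trace (A ** matrix_inv (A + B))"
proof -
  have "trace (A ** matrix_inv (A + B)) + trace (B ** matrix_inv (A + B))
      = trace ((A + B) ** matrix_inv (A + B))"
    by (simp add: trace_def matrix_matrix_mult_def sum.distrib distrib_right)
  also have "\<dots> = CARD('n)"
    by (simp add: matrix_inv_right assms trace_I)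
  finally show ?thesis
    by simp
qed

definition gram :: "real^'n^'d \<Rightarrow> real^'n \<Rightarrow> real^'d^'d" where
  "gram U w = U ** diag_mat w ** transpose U"

lemma gram_component: "gram U w $ i $ k = (\<Sum>j\<in>UNIV. U$i$j * w$j * U$k$j)"
  unfolding gram_def matrix_matrix_mult_def diag_mat_def transpose_def
  by (simp add: if_distrib sum.delta cong: if_cong)

lemma transpose_gram: "transpose (gram U w) = gram U w"
  by (simp add: vec_eq_iff transpose_def gram_component mult_ac)

lemma gram_add_scaleR: "gram U (v + a *\<^sub>R w) = gram U v + a *\<^sub>R gram U w"
  by (simp add: vec_eq_iff gram_component algebra_simps sum.distrib sum_distrib_left)

lemma inner_gram: "y \<bullet> (gram U w *v y) = (\<Sum>j\<in>UNIV. w$j * (column j U \<bullet> y)\<^sup>2)"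
proof -
  have "y \<bullet> (gram U w *v y) = (\<Sum>i\<in>UNIV. \<Sum>k\<in>UNIV. \<Sum>j\<in>UNIV. y$i * U$i$j * w$j * U$k$j * y$k)"
    by (simp add: inner_vec_def matrix_vector_mult_def gram_component sum_distrib_left
        sum_distrib_right mult_ac)
  also have "\<dots> = (\<Sum>j\<in>UNIV. \<Sum>i\<in>UNIV. \<Sum>k\<in>UNIV. y$i * U$i$j * w$j * U$k$j * y$k)"
    by (rule trans, rule sum.cong[OF refl], rule sum.swap, rule sum.swap)
  also have "\<dots> = (\<Sum>j\<in>UNIV. w$j * (column j U \<bullet> y)\<^sup>2)"
    by (simp add: column_def inner_vec_def power2_eq_square sum_product sum_distrib_left mult_ac)
  finally show ?thesis .
qed

lemma gram_nonneg:
  assumes "\<And>j. 0 \<le> w$j"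
  shows "0 \<le> y \<bullet> (gram U w *v y)"
  unfolding inner_gram by (intro sum_nonneg mult_nonneg_nonneg assms zero_le_power2)

lemma gram_pos:
  assumes "frame U" "\<And>j. 0 < w$j" "y \<noteq> 0"
  shows "0 < y \<bullet> (gram U w *v y)"
proof -
  have "inj ((*v) (transpose U))"
    using assms(1) by (simp add: frame_def full_rank_injective[symmetric] rank_transpose)
  then have "transpose U *v y \<noteq> 0"
    using assms(3) by (metis inj_eq matrix_vector_mult_0_right)
  then obtain j where "column j U \<bullet> y \<noteq> 0"
    by (auto simp: vec_eq_iff column_def inner_vec_def matrix_vector_mult_def transpose_def mult_ac)
  then have "0 < w$j * (column j U \<bullet> y)\<^sup>2"
    using assms(2) by simp
  then show ?thesis
    unfolding inner_gram
    by (rule sum_pos2[OF finite UNIV_I]) (simp add: assms(2) less_imp_le)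
qed

lemma invertible_gram:
  assumes "frame U" "\<And>j. 0 < w$j"
  shows "invertible (gram U w)"
  using gram_pos[OF assms] by (rule invertible_if_positive_definite)

lemma trace_gram_mult:
  "trace (gram U w ** X) = (\<Sum>j\<in>UNIV. w$j * (column j U \<bullet> (X *v column j U)))"
proof -
  have "trace (gram U w ** X) = (\<Sum>k\<in>UNIV. \<Sum>i\<in>UNIV. \<Sum>j\<in>UNIV. X$k$i * (U$i$j * w$j * U$k$j))"
    unfolding trace_mul_sym[of "gram U w"]
    by (simp add: trace_def matrix_matrix_mult_def gram_component sum_distrib_left)
  also have "\<dots> = (\<Sum>j\<in>UNIV. \<Sum>k\<in>UNIV. \<Sum>i\<in>UNIV. X$k$i * (U$i$j * w$j * U$k$j))"
    by (rule trans, rule sum.cong[OF refl], rule sum.swap, rule sum.swap)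
  also have "\<dots> = (\<Sum>j\<in>UNIV. w$j * (column j U \<bullet> (X *v column j U)))"
    by (simp add: column_def inner_vec_def matrix_vector_mult_def sum_distrib_left
        sum_distrib_right mult_ac)
  finally show ?thesis .
qed

lemma restr_gram_eq_gram: "restr_gram U z T = gram U (\<chi> j. if j \<in> T then z$j else 0)"
  by (simp add: restr_gram_def gram_def)

lemma transpose_restr_gram: "transpose (restr_gram U z T) = restr_gram U z T"
  by (simp add: restr_gram_eq_gram transpose_gram)

lemma restr_gram_nonneg:
  assumes "\<And>j. 0 \<le> z$j"
  shows "0 \<le> v \<bullet> (restr_gram U z T *v v)"
  unfolding restr_gram_eq_gram using assms by (intro gram_nonneg) simp

lemma invertible_restr_gram_pencil:
  assumes "frame U" "\<And>j. 0 < z$j" "0 < a"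
  shows "invertible (restr_gram U z (- T) + a *\<^sub>R restr_gram U z T)"
  unfolding restr_gram_eq_gram gram_add_scaleR[symmetric]
  using assms by (intro invertible_gram) auto

lemma progress_fun_eq:
  fixes U :: "real^'n^'d"
  assumes "frame U" "\<And>j. 0 < z$j" "0 < a"
  shows "progress_fun U z T a = CARD('d) - (\<Sum>j\<in>UNIV. (if j \<notin> T then z$j else 0) *
      (column j U \<bullet> (matrix_inv (restr_gram U z (- T) + a *\<^sub>R restr_gram U z T) *v column j U)))"
  using trace_mult_matrix_inv_sum[OF invertible_restr_gram_pencil[OF assms, of T]]
  by (simp add: progress_fun_def trace_gram_mult restr_gram_eq_gram[of U z "- T"])

theorem corollary2p17:
  fixes U :: "real^'n^'d" and z :: "real^'n" and T :: "'n set"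
  assumes "frame U"
    and "\<forall>j. z $ j > 0"
  shows "mono_on {0<..} (progress_fun U z T) \<and> concave_on {0<..} (progress_fun U z T)"
proof -
  define q where "q j a =
    column j U \<bullet> (matrix_inv (restr_gram U z (- T) + a *\<^sub>R restr_gram U z T) *v column j U)"
    for j a
  define F where "F a = (\<Sum>j\<in>UNIV. (if j \<notin> T then z$j else 0) * q j a)" for a
  have z_pos: "0 < z$j" for j
    using assms(2) by simp
  have "convex_on {0<..} (q j) \<and> antimono_on {0<..} (q j)" for j
    unfolding q_def using z_pos assms(1)
    by (intro conjI inverse_pencil_form_convex_antimono transpose_restr_gram restr_gram_nonneg
        invertible_restr_gram_pencil) (auto intro: less_imp_le)
  then have "convex_on {0<..} F" "antimono_on {0<..} F"
    unfolding F_def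
    by (auto intro!: convex_on_nonneg_sum antimono_on_nonneg_sum simp: z_pos less_imp_le)
  moreover have "progress_fun U z T a = CARD('d) - F a" if "a \<in> {0<..}" for a
    using progress_fun_eq[OF assms(1) z_pos] that by (simp add: F_def q_def)
  ultimately show ?thesis
    by (intro mono_on_concave_on_const_minus) auto
qed

end
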